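(* Let $\pi\in S_n$, $0\le u<v\le n$, and assume that $I=\{u+1,\dots,v\}$ is a $\pi$-section. Let $\sigma$ be the restriction of $\pi$ to $I$, regarded as the permutation $k\mapsto\pi(u+k)-u$ of $\{1,\dots,v-u\}$. Then $[c_u]_{\beta_\pi}$ and $[c_v]_{\beta_\pi}$ are narrows of $G/\beta_\pi$, and the subdiagram of the canonical diagram of $G/\beta_\pi$ determined by the interval $\bigl[[c_u]_{\beta_\pi},[c_v]_{\beta_\pi}\bigr]$ equals (up to boundary similarity) the canonical diagram of $G'/\beta_\sigma$, where $G'$ is the square grid of length $2(v-u)$.
   Context: For $m\ge1$, the square grid of length $2m$ is the direct product of chains $0=c_0\prec\dots\prec c_m$ and $0=d_0\prec\dots\prec d_m$, elements written $c_i\vee d_j$; $G$ denotes the one with $m=n$. For $\pi\in S_m$, $\beta_\pi$ is the join, in the lattice of join-congruences (equivalences compatible with $\vee$), of the smallest join-congruences collapsing $\{c_{i-1}\vee d_{\pi(i)},c_i\vee d_{\pi(i)-1},c_i\vee d_{\pi(i)}\}$, $i=1,\dots,m$; the quotient is a slim semimodular lattice of length $m$ and its canonical diagram is its planar diagram whose left boundary chain is $\{[c_i]_{\beta_\pi}\}$ and right boundary chain is $\{[d_i]_{\beta_\pi}\}$ (diagrams considered up to boundary similarity, i.e. up to isomorphisms preserving left and right boundary chains). A narrows of a lattice is an element comparable with every element. For $\sigma\in S_n$, a set $J$ is closed if $\sigma(J)\subseteq J$; a nonempty interval $\{a,\dots,b\}$ of $\{1<\dots<n\}$ is a $\sigma$-section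 if it, $\{1,\dots,a-1\}$ and $\{b+1,\dots,n\}$ are closed. *)

theory Defs
  imports "HOL-Combinatorics.Permutations"
begin

text \<open>The element c_i \<or> d_j of the grid is represented by the pair (i,j),
  with 0 \<le> i,j \<le> m; c_i = (i,0), d_j = (0,j). The order is componentwise.\<close>

definition grid :: "nat \<Rightarrow> (nat \<times> nat) set" where
  "grid m = {0..m} \<times> {0..m}"

definition gjoin :: "nat \<times> nat \<Rightarrow> nat \<times> nat \<Rightarrow> nat \<times> nat" where
  "gjoin x y = (max (fst x) (fst y), max (snd x) (snd y))"

definition join_cong :: "nat \<Rightarrow> ((nat \<times> nat) \<times> (nat \<times> nat)) set \<Rightarrow> bool" where
  "join_cong m \<theta> \<longleftrightarrow> equiv (grid m) \<theta> \<and>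
     (\<forall>x y z. (x, y) \<in> \<theta> \<longrightarrow> z \<in> grid m \<longrightarrow> (gjoin x z, gjoin y z) \<in> \<theta>)"

definition cong_gen :: "nat \<Rightarrow> (nat \<times> nat) set \<Rightarrow> ((nat \<times> nat) \<times> (nat \<times> nat)) set" where
  "cong_gen m S = \<Inter>{\<theta>. join_cong m \<theta> \<and> S \<times> S \<subseteq> \<theta>}"

definition cong_join :: "nat \<Rightarrow> ((nat \<times> nat) \<times> (nat \<times> nat)) set set \<Rightarrow> ((nat \<times> nat) \<times> (nat \<times> nat)) set" where
  "cong_join m \<Theta>s = \<Inter>{\<theta>. join_cong m \<theta> \<and> (\<forall>\<phi>\<in>\<Theta>s. \<phi> \<subseteq> \<theta>)}"

definition beta :: "nat \<Rightarrow> (nat \<Rightarrow> nat) \<Rightarrow> ((nat \<times> nat) \<times> (nat \<times> nat)) set" where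
  "beta m \<pi> = cong_join m
     ((\<lambda>i. cong_gen m {(i - 1, \<pi> i), (i, \<pi> i - 1), (i, \<pi> i)}) ` {1..m})"

text \<open>Elements of the quotient are the classes in grid m // \<theta>;
  [x] \<le> [y] iff [x] \<or> [y] = [y], i.e. (x \<or> y, y) \<in> \<theta>.\<close>

definition cls :: "((nat \<times> nat) \<times> (nat \<times> nat)) set \<Rightarrow> nat \<times> nat \<Rightarrow> (nat \<times> nat) set" where
  "cls \<theta> x = \<theta> `` {x}"

definition qle :: "((nat \<times> nat) \<times> (nat \<times> nat)) set \<Rightarrow> (nat \<times> nat) set \<Rightarrow> (nat \<times> nat) set \<Rightarrow> bool" where
  "qle \<theta> A B \<longleftrightarrow> (\<exists>x\<in>A. \<exists>y\<in>B. (gjoin x y, y) \<in> \<theta>)"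

definition narrows :: "nat \<Rightarrow> ((nat \<times> nat) \<times> (nat \<times> nat)) set \<Rightarrow> (nat \<times> nat) set \<Rightarrow> bool" where
  "narrows m \<theta> A \<longleftrightarrow> A \<in> grid m // \<theta> \<and>
     (\<forall>B \<in> grid m // \<theta>. qle \<theta> A B \<or> qle \<theta> B A)"

definition qinterval :: "nat \<Rightarrow> ((nat \<times> nat) \<times> (nat \<times> nat)) set \<Rightarrow> (nat \<times> nat) set \<Rightarrow> (nat \<times> nat) set \<Rightarrow> (nat \<times> nat) set set" where
  "qinterval m \<theta> A B = {X \<in> grid m // \<theta>. qle \<theta> A X \<and> qle \<theta> X B}"

definition left_bd :: "nat \<Rightarrow> ((nat \<times> nat) \<times> (nat \<times> nat)) set \<Rightarrow> (nat \<times> nat) set set" where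
  "left_bd m \<theta> = (\<lambda>i. cls \<theta> (i, 0)) ` {0..m}"

definition right_bd :: "nat \<Rightarrow> ((nat \<times> nat) \<times> (nat \<times> nat)) set \<Rightarrow> (nat \<times> nat) set set" where
  "right_bd m \<theta> = (\<lambda>j. cls \<theta> (0, j)) ` {0..m}"

text \<open>The subdiagram of the canonical diagram of G/\<theta> (G of length 2m) determined by the
  interval [A,B] (A,B narrows), with left/right boundary chains the intersections of the
  ambient boundary chains with [A,B], is boundary-similar to the canonical diagram of
  G'/\<theta>' (G' of length 2m'): there is a lattice (= order) isomorphism preserving the left
  and the right boundary chains.\<close>

definition subdiagram_similar ::
  "nat \<Rightarrow> ((nat \<times> nat) \<times> (nat \<times> nat)) set \<Rightarrow> (nat \<times> nat) set \<Rightarrow> (nat \<times> nat) set \<Rightarrow>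
   nat \<Rightarrow> ((nat \<times> nat) \<times> (nat \<times> nat)) set \<Rightarrow> bool" where
  "subdiagram_similar m \<theta> A B m' \<theta>' \<longleftrightarrow>
    (\<exists>\<phi>. bij_betw \<phi> (qinterval m \<theta> A B) (grid m' // \<theta>') \<and>
      (\<forall>X\<in>qinterval m \<theta> A B. \<forall>Y\<in>qinterval m \<theta> A B. qle \<theta> X Y \<longleftrightarrow> qle \<theta>' (\<phi> X) (\<phi> Y)) \<and>
      \<phi> ` (left_bd m \<theta> \<inter> qinterval m \<theta> A B) = left_bd m' \<theta>' \<and>
      \<phi> ` (right_bd m \<theta> \<inter> qinterval m \<theta> A B) = right_bd m' \<theta>')"

definition closed_set :: "(nat \<Rightarrow> nat) \<Rightarrow> nat set \<Rightarrow> bool" where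
  "closed_set \<sigma> J \<longleftrightarrow> \<sigma> ` J \<subseteq> J"

definition is_section :: "nat \<Rightarrow> (nat \<Rightarrow> nat) \<Rightarrow> nat set \<Rightarrow> bool" where
  "is_section n \<sigma> I \<longleftrightarrow> (\<exists>a b. 1 \<le> a \<and> a \<le> b \<and> b \<le> n \<and> I = {a..b} \<and>
     closed_set \<sigma> {a..b} \<and> closed_set \<sigma> {1..<a} \<and> closed_set \<sigma> {b+1..n})"

end

theory Submission
  imports Defs
begin

text \<open>Write \<open>trace m p (i, j)\<close> for the set of those \<open>k\<close> whose collapsed square, with top corner
  \<open>(k, p k)\<close>, does not lie strictly north-east of \<open>c\<^sub>i \<or> d\<^sub>j\<close>. The trace turns joins into
  unions, it is constant on each collapsed square, and conversely two grid elements with the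
  same trace can be joined by steps along collapsed edges; so \<open>\<beta>\<^sub>p\<close> is exactly the kernel of
  the trace and \<open>G/\<beta>\<^sub>p\<close> is the set of traces ordered by inclusion. If \<open>{1..w}\<close> is
  \<open>\<pi>\<close>-closed, the trace of \<open>c\<^sub>w\<close> is \<open>{1..w}\<close>, which is comparable with every trace, so
  \<open>[c\<^sub>w]\<close> is a narrows. A trace between \<open>{1..u}\<close> and \<open>{1..v}\<close> is determined by its part in
  \<open>{u+1..v}\<close>, and shifting that part down by \<open>u\<close> gives precisely a trace for \<open>\<sigma>\<close>; this
  yields the boundary-preserving isomorphism.\<close>

lemma gjoin_in_grid: "x \<in> grid m \<Longrightarrow> y \<in> grid m \<Longrightarrow> gjoin x y \<in> grid m"
  by (auto simp: grid_def gjoin_def)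

definition join_hom :: "(nat \<times> nat \<Rightarrow> 'a set) \<Rightarrow> bool" where
  "join_hom S \<longleftrightarrow> (\<forall>x y. S (gjoin x y) = S x \<union> S y)"

definition grid_kernel :: "nat \<Rightarrow> (nat \<times> nat \<Rightarrow> 'a) \<Rightarrow> ((nat \<times> nat) \<times> (nat \<times> nat)) set" where
  "grid_kernel m S = {(x, y). x \<in> grid m \<and> y \<in> grid m \<and> S x = S y}"

lemma join_homD: "join_hom S \<Longrightarrow> S (gjoin x y) = S x \<union> S y"
  unfolding join_hom_def by blast

lemma join_cong_grid_kernel:
  assumes "join_hom S"
  shows "join_cong m (grid_kernel m S)"
  using assms gjoin_in_grid
  unfolding join_cong_def equiv_def refl_on_def sym_on_def trans_on_def grid_kernel_def join_hom_def
  by auto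

lemma join_cong_Inter:
  assumes "F \<noteq> {}" and "\<And>\<theta>. \<theta> \<in> F \<Longrightarrow> join_cong m \<theta>"
  shows "join_cong m (\<Inter>F)"
proof -
  have "\<Inter>F \<subseteq> grid m \<times> grid m"
    using assms unfolding join_cong_def equiv_def refl_on_def by blast
  moreover have "refl_on (grid m) (\<Inter>F)"
    using assms(2) unfolding join_cong_def equiv_def refl_on_def by blast
  moreover have "sym (\<Inter>F)" "trans (\<Inter>F)"
    using assms(2) unfolding join_cong_def equiv_def sym_on_def trans_on_def by blast+
  moreover have "\<forall>x y z. (x, y) \<in> \<Inter>F \<longrightarrow> z \<in> grid m \<longrightarrow> (gjoin x z, gjoin y z) \<in> \<Inter>F"
    using assms(2) unfolding join_cong_def by blast
  ultimately show ?thesis unfolding join_cong_def equiv_def by blast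
qed

lemma cls_grid_kernel: "x \<in> grid m \<Longrightarrow> cls (grid_kernel m S) x = {y \<in> grid m. S y = S x}"
  unfolding cls_def grid_kernel_def by auto

lemma in_cls_grid_kernel: "x \<in> grid m \<Longrightarrow> x \<in> cls (grid_kernel m S) x"
  by (simp add: cls_grid_kernel)

lemma quotient_grid_kernel_iff:
  "X \<in> grid m // grid_kernel m S \<longleftrightarrow> (\<exists>x\<in>grid m. X = cls (grid_kernel m S) x)"
  unfolding quotient_def cls_def by auto

lemma cls_grid_kernel_eq_iff:
  assumes "x \<in> grid m" "y \<in> grid m"
  shows "cls (grid_kernel m S) x = cls (grid_kernel m S) y \<longleftrightarrow> S x = S y"
  using assms by (auto simp: cls_grid_kernel)

lemma qle_grid_kernel_iff:
  assumes "join_hom S" "x \<in> grid m" "y \<in> grid m"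
  shows "qle (grid_kernel m S) (cls (grid_kernel m S) x) (cls (grid_kernel m S) y) \<longleftrightarrow> S x \<subseteq> S y"
proof
  assume "qle (grid_kernel m S) (cls (grid_kernel m S) x) (cls (grid_kernel m S) y)"
  then obtain x' y' where "x' \<in> grid m" "S x' = S x" "y' \<in> grid m" "S y' = S y"
    and "(gjoin x' y', y') \<in> grid_kernel m S"
    using assms(2,3) unfolding qle_def by (auto simp: cls_grid_kernel)
  then show "S x \<subseteq> S y"
    using join_homD[OF assms(1)] by (auto simp: grid_kernel_def)
next
  assume "S x \<subseteq> S y"
  then have "(gjoin x y, y) \<in> grid_kernel m S"
    using assms gjoin_in_grid join_homD[OF assms(1)] by (auto simp: grid_kernel_def)
  then show "qle (grid_kernel m S) (cls (grid_kernel m S) x) (cls (grid_kernel m S) y)"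
    using assms in_cls_grid_kernel unfolding qle_def by blast
qed

lemma qinterval_grid_kernel:
  assumes "join_hom S" "a \<in> grid m" "b \<in> grid m"
  shows "qinterval m (grid_kernel m S) (cls (grid_kernel m S) a) (cls (grid_kernel m S) b) =
    cls (grid_kernel m S) ` {x \<in> grid m. S a \<subseteq> S x \<and> S x \<subseteq> S b}"
  using assms unfolding qinterval_def quotient_grid_kernel_iff by (auto simp: qle_grid_kernel_iff)

definition trace :: "nat \<Rightarrow> (nat \<Rightarrow> nat) \<Rightarrow> nat \<times> nat \<Rightarrow> nat set" where
  "trace m p x = {k \<in> {1..m}. k \<le> fst x \<or> p k \<le> snd x}"

lemma join_hom_trace: "join_hom (trace m p)"
  by (auto simp: join_hom_def trace_def gjoin_def)

lemma trace_mono: "fst x \<le> fst y \<Longrightarrow> snd x \<le> snd y \<Longrightarrow> trace m p x \<subseteq> trace m p y"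
  unfolding trace_def by auto

lemma trace_collapses_generators:
  assumes p: "bij_betw p {1..m} {1..m}" and i: "i \<in> {1..m}"
  shows "trace m p (i - 1, p i) = trace m p (i, p i)" "trace m p (i, p i - 1) = trace m p (i, p i)"
proof -
  have "(k \<le> i - 1 \<or> p k \<le> p i) = (k \<le> i \<or> p k \<le> p i)" for k
    using i by (cases "k = i") auto
  then show "trace m p (i - 1, p i) = trace m p (i, p i)"
    unfolding trace_def by simp
  have "(k \<le> i \<or> p k \<le> p i - 1) = (k \<le> i \<or> p k \<le> p i)" if k: "k \<in> {1..m}" for k
  proof (cases "k = i")
    case False
    then have "p k \<noteq> p i" using k i p inj_on_contraD unfolding bij_betw_def by fastforce
    then show ?thesis by auto
  qed simp
  then show "trace m p (i, p i - 1) = trace m p (i, p i)"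
    unfolding trace_def by auto
qed

lemma cong_gen_subset_trace_kernel:
  assumes p: "bij_betw p {1..m} {1..m}" and i: "i \<in> {1..m}"
  shows "cong_gen m {(i - 1, p i), (i, p i - 1), (i, p i)} \<subseteq> grid_kernel m (trace m p)"
  unfolding cong_gen_def
proof (rule Inter_lower, intro CollectI conjI subsetI)
  show "join_cong m (grid_kernel m (trace m p))"
    by (rule join_cong_grid_kernel[OF join_hom_trace])
  have "p i \<in> {1..m}" using p i bij_betwE by blast
  then have "{(i - 1, p i), (i, p i - 1), (i, p i)} \<subseteq> grid m"
    using i by (auto simp: grid_def)
  then show "xy \<in> grid_kernel m (trace m p)"
    if "xy \<in> {(i - 1, p i), (i, p i - 1), (i, p i)} \<times> {(i - 1, p i), (i, p i - 1), (i, p i)}" for xy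
    using that trace_collapses_generators[OF p i] by (auto simp: grid_kernel_def)
qed

lemma trace_kernel_in_beta_family:
  assumes "bij_betw p {1..m} {1..m}"
  shows "grid_kernel m (trace m p) \<in> {\<theta>. join_cong m \<theta> \<and>
    (\<forall>\<phi>\<in>(\<lambda>i. cong_gen m {(i - 1, p i), (i, p i - 1), (i, p i)}) ` {1..m}. \<phi> \<subseteq> \<theta>)}"
  using join_cong_grid_kernel[OF join_hom_trace] cong_gen_subset_trace_kernel[OF assms] by auto

lemma beta_subset_trace_kernel:
  assumes "bij_betw p {1..m} {1..m}"
  shows "beta m p \<subseteq> grid_kernel m (trace m p)"
  unfolding beta_def cong_join_def using trace_kernel_in_beta_family[OF assms] by (rule Inter_lower)

lemma join_cong_beta:
  assumes "bij_betw p {1..m} {1..m}"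
  shows "join_cong m (beta m p)"
  unfolding beta_def cong_join_def
  by (rule join_cong_Inter) (use trace_kernel_in_beta_family[OF assms] in auto)

lemma generator_pair_in_beta:
  assumes "i \<in> {1..m}"
    and "x \<in> {(i - 1, p i), (i, p i - 1), (i, p i)}" "y \<in> {(i - 1, p i), (i, p i - 1), (i, p i)}"
  shows "(x, y) \<in> beta m p"
proof -
  have "(x, y) \<in> cong_gen m {(i - 1, p i), (i, p i - 1), (i, p i)}"
    using assms(2,3) unfolding cong_gen_def by blast
  then show ?thesis
    using assms(1) unfolding beta_def cong_join_def by blast
qed

lemma beta_step_fst:
  assumes p: "bij_betw p {1..m} {1..m}" and x: "(i, j) \<in> grid m" and "i + 1 \<in> trace m p (i, j)"
  shows "((i, j), (i + 1, j)) \<in> beta m p"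
proof -
  have "i + 1 \<le> m" "p (i + 1) \<le> j"
    using \<open>i + 1 \<in> trace m p (i, j)\<close> by (simp_all add: trace_def)
  then have "((i, p (i + 1)), (i + 1, p (i + 1))) \<in> beta m p"
    using generator_pair_in_beta[of "i + 1" m] by auto
  then have "(gjoin (i, p (i + 1)) (i, j), gjoin (i + 1, p (i + 1)) (i, j)) \<in> beta m p"
    using join_cong_beta[OF p] x unfolding join_cong_def by blast
  then show ?thesis using \<open>p (i + 1) \<le> j\<close> by (simp add: gjoin_def max_def)
qed

lemma beta_step_snd:
  assumes p: "bij_betw p {1..m} {1..m}" and x: "(i, j) \<in> grid m"
    and "k \<in> trace m p (i, j)" "p k = j + 1"
  shows "((i, j), (i, j + 1)) \<in> beta m p"
proof -
  have "k \<in> {1..m}" "k \<le> i"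
    using \<open>k \<in> trace m p (i, j)\<close> \<open>p k = j + 1\<close> by (simp_all add: trace_def)
  then have "((k, p k - 1), (k, p k)) \<in> beta m p"
    using generator_pair_in_beta[of k m] by auto
  then have "(gjoin (k, p k - 1) (i, j), gjoin (k, p k) (i, j)) \<in> beta m p"
    using join_cong_beta[OF p] x unfolding join_cong_def by blast
  then show ?thesis using \<open>k \<le> i\<close> \<open>p k = j + 1\<close> by (simp add: gjoin_def max_def)
qed

lemma beta_step_towards:
  assumes p: "bij_betw p {1..m} {1..m}" and x: "x \<in> grid m" and z: "z \<in> grid m"
    and "fst x \<le> fst z" "snd x \<le> snd z" "x \<noteq> z" and eq: "trace m p x = trace m p z"
  obtains y where "(x, y) \<in> beta m p" "y \<in> grid m" "fst y \<le> fst z" "snd y \<le> snd z"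
    "trace m p y = trace m p z" "fst z - fst y + (snd z - snd y) < fst z - fst x + (snd z - snd x)"
proof -
  obtain i j a b where ij: "x = (i, j)" and ab: "z = (a, b)" by fastforce
  have "a \<le> m" "b \<le> m" using z ab by (auto simp: grid_def)
  have "\<exists>y. (x, y) \<in> beta m p \<and> fst x \<le> fst y \<and> snd x \<le> snd y \<and> fst y \<le> fst z \<and> snd y \<le> snd z \<and>
      fst z - fst y + (snd z - snd y) < fst z - fst x + (snd z - snd x)"
  proof (cases "i < a")
    case True
    then have "i + 1 \<in> trace m p x"
      using eq \<open>a \<le> m\<close> ab by (simp add: trace_def)
    then have "(x, (i + 1, j)) \<in> beta m p"
      using beta_step_fst[OF p] x ij by simp
    then show ?thesis
      using True assms(5) ij ab by (intro exI[of _ "(i + 1, j)"]) auto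
  next
    case False
    then have "i = a" "j < b" using assms(4-6) ij ab by auto
    then have "j + 1 \<in> p ` {1..m}"
      using \<open>b \<le> m\<close> bij_betw_imp_surj_on[OF p] by simp
    then obtain k where k: "k \<in> {1..m}" "p k = j + 1" by (metis imageE)
    then have "k \<in> trace m p x"
      using eq \<open>j < b\<close> ab by (simp add: trace_def)
    then have "(x, (i, j + 1)) \<in> beta m p"
      using beta_step_snd[OF p _ _ k(2)] x ij by simp
    then show ?thesis
      using \<open>i = a\<close> \<open>j < b\<close> ij ab by (intro exI[of _ "(i, j + 1)"]) auto
  qed
  then obtain y where y: "(x, y) \<in> beta m p" "fst x \<le> fst y" "snd x \<le> snd y" "fst y \<le> fst z"
    "snd y \<le> snd z" "fst z - fst y + (snd z - snd y) < fst z - fst x + (snd z - snd x)"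
    by blast
  moreover have "y \<in> grid m"
    using y(1) join_cong_beta[OF p] unfolding join_cong_def equiv_def by blast
  moreover have "trace m p y = trace m p z"
    using trace_mono[OF y(2,3)] trace_mono[OF y(4,5)] eq by blast
  ultimately show ?thesis using that by blast
qed

lemma beta_of_trace_eq_below:
  assumes p: "bij_betw p {1..m} {1..m}"
  shows "x \<in> grid m \<Longrightarrow> z \<in> grid m \<Longrightarrow> fst x \<le> fst z \<Longrightarrow> snd x \<le> snd z \<Longrightarrow>
    trace m p x = trace m p z \<Longrightarrow> (x, z) \<in> beta m p"
proof (induction "fst z - fst x + (snd z - snd x)" arbitrary: x rule: less_induct)
  case less
  have equiv: "equiv (grid m) (beta m p)"
    using join_cong_beta[OF p] unfolding join_cong_def by blast
  show ?case
  proof (cases "x = z")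
    case True
    then show ?thesis using equiv less.prems(1) unfolding equiv_def refl_on_def by blast
  next
    case False
    then obtain y where "(x, y) \<in> beta m p" "y \<in> grid m" "fst y \<le> fst z" "snd y \<le> snd z"
      "trace m p y = trace m p z" "fst z - fst y + (snd z - snd y) < fst z - fst x + (snd z - snd x)"
      using beta_step_towards[OF p] less.prems by metis
    then show ?thesis
      using less.hyps[of y] less.prems(2) equiv by (meson equiv_def transD)
  qed
qed

theorem beta_eq_trace_kernel:
  assumes p: "bij_betw p {1..m} {1..m}"
  shows "beta m p = grid_kernel m (trace m p)"
proof
  show "beta m p \<subseteq> grid_kernel m (trace m p)" by (rule beta_subset_trace_kernel[OF p])
  show "grid_kernel m (trace m p) \<subseteq> beta m p"
  proof
    fix xy assume "xy \<in> grid_kernel m (trace m p)"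
    then obtain x y where xy: "xy = (x, y)" "x \<in> grid m" "y \<in> grid m" "trace m p x = trace m p y"
      unfolding grid_kernel_def by blast
    have "gjoin x y \<in> grid m" using xy gjoin_in_grid by blast
    moreover have "trace m p (gjoin x y) = trace m p x"
      using xy(4) join_homD[OF join_hom_trace, of m p x y] by simp
    ultimately have "(x, gjoin x y) \<in> beta m p" "(y, gjoin x y) \<in> beta m p"
      using xy(2-4) by (auto intro!: beta_of_trace_eq_below[OF p] simp: gjoin_def)
    moreover have "sym (beta m p)" "trans (beta m p)"
      using join_cong_beta[OF p] unfolding join_cong_def equiv_def by blast+
    ultimately show "xy \<in> beta m p"
      unfolding xy(1) by (meson symD transD)
  qed
qed

text \<open>The map \<open>g\<close> from the larger grid to the smaller one acts on the invariants through \<open>h\<close>,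
  and \<open>e\<close> is a section of \<open>g\<close> with values in the interval \<open>[a, b]\<close>; together they carry that
  interval of \<open>G/ker S\<close> onto \<open>G'/ker S'\<close>.\<close>

locale grid_kernel_transport =
  fixes m m' :: nat and S :: "nat \<times> nat \<Rightarrow> 'a set" and S' :: "nat \<times> nat \<Rightarrow> 'b set"
    and h :: "'a set \<Rightarrow> 'b set" and g e :: "nat \<times> nat \<Rightarrow> nat \<times> nat" and a b :: "nat \<times> nat"
  assumes join_hom_S: "join_hom S" and join_hom_S': "join_hom S'"
    and a_grid: "a \<in> grid m" and b_grid: "b \<in> grid m"
    and g_grid: "\<And>x. x \<in> grid m \<Longrightarrow> g x \<in> grid m'"
    and S'_g: "\<And>x. x \<in> grid m \<Longrightarrow> S' (g x) = h (S x)"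
    and mono_h: "mono h"
    and h_reflects: "\<And>x y. \<lbrakk>x \<in> grid m; y \<in> grid m; S a \<subseteq> S x; S x \<subseteq> S b; S a \<subseteq> S y; S y \<subseteq> S b;
      h (S x) \<subseteq> h (S y)\<rbrakk> \<Longrightarrow> S x \<subseteq> S y"
    and e_section: "\<And>y. y \<in> grid m' \<Longrightarrow> e y \<in> grid m \<and> S a \<subseteq> S (e y) \<and> S (e y) \<subseteq> S b \<and> g (e y) = y"
    and g_left: "\<And>x. snd x = 0 \<Longrightarrow> snd (g x) = 0" and g_right: "\<And>x. fst x = 0 \<Longrightarrow> fst (g x) = 0"
    and e_left: "\<And>y. y \<in> grid m' \<Longrightarrow> snd y = 0 \<Longrightarrow> \<exists>x\<in>grid m. snd x = 0 \<and> S x = S (e y)"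
    and e_right: "\<And>y. y \<in> grid m' \<Longrightarrow> fst y = 0 \<Longrightarrow> \<exists>x\<in>grid m. fst x = 0 \<and> S x = S (e y)"
begin

abbreviation "\<theta> \<equiv> grid_kernel m S"
abbreviation "\<theta>' \<equiv> grid_kernel m' S'"
abbreviation "Q \<equiv> qinterval m \<theta> (cls \<theta> a) (cls \<theta> b)"

definition induced :: "(nat \<times> nat) set \<Rightarrow> (nat \<times> nat) set" where
  "induced X = cls \<theta>' (g (SOME x. x \<in> X))"

lemma induced_cls:
  assumes x: "x \<in> grid m"
  shows "induced (cls \<theta> x) = cls \<theta>' (g x)"
proof -
  define y where "y = (SOME y. y \<in> cls \<theta> x)"
  have "y \<in> cls \<theta> x"
    unfolding y_def using in_cls_grid_kernel[OF x] by (rule someI)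
  then have y: "y \<in> grid m" "S y = S x"
    using cls_grid_kernel[OF x] by auto
  then have "S' (g y) = S' (g x)"
    using S'_g x by simp
  then show ?thesis
    unfolding induced_def y_def[symmetric] using cls_grid_kernel_eq_iff g_grid x y(1) by blast
qed

lemma in_interval_iff: "X \<in> Q \<longleftrightarrow> (\<exists>x\<in>grid m. S a \<subseteq> S x \<and> S x \<subseteq> S b \<and> X = cls \<theta> x)"
  using qinterval_grid_kernel[OF join_hom_S a_grid b_grid] by auto

lemma h_subset_iff:
  assumes "x \<in> grid m" "y \<in> grid m" "S a \<subseteq> S x" "S x \<subseteq> S b" "S a \<subseteq> S y" "S y \<subseteq> S b"
  shows "h (S x) \<subseteq> h (S y) \<longleftrightarrow> S x \<subseteq> S y"
  using h_reflects[OF assms] monoD[OF mono_h] by blast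

lemma induced_qle_iff:
  assumes "X \<in> Q" "Y \<in> Q"
  shows "qle \<theta> X Y \<longleftrightarrow> qle \<theta>' (induced X) (induced Y)"
proof -
  obtain x y where x: "x \<in> grid m" "S a \<subseteq> S x" "S x \<subseteq> S b" "X = cls \<theta> x"
    and y: "y \<in> grid m" "S a \<subseteq> S y" "S y \<subseteq> S b" "Y = cls \<theta> y"
    using assms in_interval_iff by meson
  have "qle \<theta> X Y \<longleftrightarrow> S x \<subseteq> S y"
    using qle_grid_kernel_iff[OF join_hom_S x(1) y(1)] x(4) y(4) by simp
  also have "\<dots> \<longleftrightarrow> S' (g x) \<subseteq> S' (g y)"
    using h_subset_iff x y S'_g by simp
  also have "\<dots> \<longleftrightarrow> qle \<theta>' (induced X) (induced Y)"
    using qle_grid_kernel_iff[OF join_hom_S' g_grid g_grid] x y induced_cls by simp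
  finally show ?thesis .
qed

lemma bij_betw_induced: "bij_betw induced Q (grid m' // \<theta>')"
proof (rule bij_betw_imageI)
  show "inj_on induced Q"
  proof (rule inj_onI)
    fix X Y assume X: "X \<in> Q" and Y: "Y \<in> Q" and eq: "induced X = induced Y"
    obtain x y where x: "x \<in> grid m" "S a \<subseteq> S x" "S x \<subseteq> S b" "X = cls \<theta> x"
      and y: "y \<in> grid m" "S a \<subseteq> S y" "S y \<subseteq> S b" "Y = cls \<theta> y"
      using X Y in_interval_iff by meson
    then have "cls \<theta>' (g x) = cls \<theta>' (g y)"
      using eq induced_cls by simp
    then have "S' (g x) = S' (g y)"
      using cls_grid_kernel_eq_iff[OF g_grid[OF x(1)] g_grid[OF y(1)], of S'] by simp
    then have "S x = S y"
      using h_subset_iff[OF x(1) y(1) x(2,3) y(2,3)] h_subset_iff[OF y(1) x(1) y(2,3) x(2,3)] S'_g x(1) y(1)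
      by auto
    then show "X = Y"
      using cls_grid_kernel_eq_iff[OF x(1) y(1), of S] x(4) y(4) by simp
  qed
  show "induced ` Q = grid m' // \<theta>'"
  proof
    show "induced ` Q \<subseteq> grid m' // \<theta>'"
      using in_interval_iff induced_cls g_grid quotient_grid_kernel_iff by fastforce
    show "grid m' // \<theta>' \<subseteq> induced ` Q"
    proof
      fix Z assume "Z \<in> grid m' // \<theta>'"
      then obtain z where z: "z \<in> grid m'" "Z = cls \<theta>' z"
        using quotient_grid_kernel_iff by meson
      then have "cls \<theta> (e z) \<in> Q" "induced (cls \<theta> (e z)) = Z"
        using e_section[OF z(1)] in_interval_iff induced_cls by auto
      then show "Z \<in> induced ` Q" by blast
    qed
  qed
qed

lemma induced_image_boundary:
  assumes "\<And>x. L x \<Longrightarrow> L (g x)" "\<And>y. y \<in> grid m' \<Longrightarrow> L y \<Longrightarrow> \<exists>x\<in>grid m. L x \<and> S x = S (e y)"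
  shows "induced ` (cls \<theta> ` {x \<in> grid m. L x} \<inter> Q) = cls \<theta>' ` {y \<in> grid m'. L y}"
proof
  show "induced ` (cls \<theta> ` {x \<in> grid m. L x} \<inter> Q) \<subseteq> cls \<theta>' ` {y \<in> grid m'. L y}"
    using assms(1) g_grid induced_cls by auto
  show "cls \<theta>' ` {y \<in> grid m'. L y} \<subseteq> induced ` (cls \<theta> ` {x \<in> grid m. L x} \<inter> Q)"
  proof clarify
    fix y assume y: "y \<in> grid m'" "L y"
    then obtain x where x: "x \<in> grid m" "L x" "S x = S (e y)"
      using assms(2) by blast
    then have "cls \<theta> (e y) = cls \<theta> x"
      using e_section[OF y(1)] cls_grid_kernel_eq_iff by metis
    then have "cls \<theta> (e y) \<in> cls \<theta> ` {x \<in> grid m. L x}"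
      using x by auto
    moreover have "cls \<theta> (e y) \<in> Q" "induced (cls \<theta> (e y)) = cls \<theta>' y"
      using e_section[OF y(1)] in_interval_iff induced_cls by auto
    ultimately show "cls \<theta>' y \<in> induced ` (cls \<theta> ` {x \<in> grid m. L x} \<inter> Q)" by blast
  qed
qed

theorem subdiagram_similar_kernels: "subdiagram_similar m \<theta> (cls \<theta> a) (cls \<theta> b) m' \<theta>'"
proof -
  have bd: "left_bd k \<kappa> = cls \<kappa> ` {x \<in> grid k. snd x = 0}"
    "right_bd k \<kappa> = cls \<kappa> ` {x \<in> grid k. fst x = 0}" for k \<kappa>
    by (force simp: left_bd_def right_bd_def grid_def)+
  show ?thesis
    unfolding subdiagram_similar_def bd
  proof (intro exI[of _ induced] conjI ballI)
    show "bij_betw induced Q (grid m' // \<theta>')" by (rule bij_betw_induced)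
    show "qle \<theta> X Y \<longleftrightarrow> qle \<theta>' (induced X) (induced Y)" if "X \<in> Q" "Y \<in> Q" for X Y
      using that by (rule induced_qle_iff)
    show "induced ` (cls \<theta> ` {x \<in> grid m. snd x = 0} \<inter> Q) = cls \<theta>' ` {y \<in> grid m'. snd y = 0}"
      by (rule induced_image_boundary) (use g_left e_left in auto)
    show "induced ` (cls \<theta> ` {x \<in> grid m. fst x = 0} \<inter> Q) = cls \<theta>' ` {y \<in> grid m'. fst y = 0}"
      by (rule induced_image_boundary) (use g_right e_right in auto)
  qed
qed

end

lemma closed_prefix_iff:
  assumes p: "bij_betw p {1..m} {1..m}" and "w \<le> m" and closed: "closed_set p {1..w}"
    and k: "k \<in> {1..m}"
  shows "p k \<le> w \<longleftrightarrow> k \<le> w"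
proof
  assume "k \<le> w"
  then have "p k \<in> p ` {1..w}" using k by simp
  then show "p k \<le> w" using closed unfolding closed_set_def by auto
next
  have inj: "inj_on p {1..m}" using p by (simp add: bij_betw_def)
  then have "p ` {1..w} = {1..w}"
    using closed \<open>w \<le> m\<close> unfolding closed_set_def by (intro endo_inj_surj) (auto elim: inj_on_subset)
  moreover assume "p k \<le> w"
  moreover have "1 \<le> p k" using p k bij_betwE by fastforce
  ultimately obtain k' where "k' \<in> {1..w}" "p k = p k'"
    by (metis atLeastAtMost_iff imageE)
  then show "k \<le> w"
    using inj k \<open>w \<le> m\<close> by (metis atLeastAtMost_iff inj_onD order_trans)
qed

lemma trace_prefix_point:
  assumes "bij_betw p {1..m} {1..m}" "w \<le> m"
  shows "trace m p (w, 0) = {1..w}"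
proof -
  have "1 \<le> p k" if "k \<in> {1..m}" for k using assms(1) that bij_betwE by fastforce
  then show ?thesis using assms(2) by (force simp: trace_def)
qed

lemma trace_comparable_closed_prefix:
  assumes "bij_betw p {1..m} {1..m}" "w \<le> m" "closed_set p {1..w}"
  shows "{1..w} \<subseteq> trace m p x \<or> trace m p x \<subseteq> {1..w}"
proof (cases "w \<le> fst x \<or> w \<le> snd x")
  case True
  have "k \<in> trace m p x" if "k \<in> {1..w}" for k
    using True that closed_prefix_iff[OF assms, of k] assms(2) by (auto simp: trace_def)
  then show ?thesis by blast
next
  case False
  have "k \<in> {1..w}" if "k \<in> trace m p x" for k
  proof -
    have k: "k \<in> {1..m}" "k \<le> fst x \<or> p k \<le> snd x"
      using that by (simp_all add: trace_def)
    then show ?thesis using False closed_prefix_iff[OF assms k(1)] by auto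
  qed
  then show ?thesis by blast
qed

theorem narrows_closed_prefix:
  assumes p: "bij_betw p {1..m} {1..m}" and "w \<le> m" "closed_set p {1..w}"
  shows "narrows m (beta m p) (cls (beta m p) (w, 0))"
proof -
  have w: "(w, 0) \<in> grid m" using \<open>w \<le> m\<close> by (simp add: grid_def)
  have "qle (grid_kernel m (trace m p)) (cls (grid_kernel m (trace m p)) (w, 0)) X \<or>
      qle (grid_kernel m (trace m p)) X (cls (grid_kernel m (trace m p)) (w, 0))"
    if X: "X \<in> grid m // grid_kernel m (trace m p)" for X
  proof -
    obtain x where "x \<in> grid m" "X = cls (grid_kernel m (trace m p)) x"
      using X unfolding quotient_grid_kernel_iff by blast
    then show ?thesis
      using trace_comparable_closed_prefix[OF assms] trace_prefix_point[OF p \<open>w \<le> m\<close>]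
        qle_grid_kernel_iff[OF join_hom_trace] w by simp
  qed
  then show ?thesis
    unfolding narrows_def beta_eq_trace_kernel[OF p] using w quotient_grid_kernel_iff by blast
qed

lemma closed_prefixes_bounds:
  assumes p: "bij_betw p {1..n} {1..n}" and "u \<le> v" "v \<le> n"
    and "closed_set p {1..u}" "closed_set p {1..v}" and k: "k \<in> {u+1..v}"
  shows "u < p k" "p k \<le> v"
  using closed_prefix_iff[OF p _ assms(4), of k] closed_prefix_iff[OF p _ assms(5), of k] assms(2,3) k
  by auto

lemma bij_betw_section_restriction:
  assumes p: "bij_betw p {1..n} {1..n}" and "u \<le> v" "v \<le> n"
    and "closed_set p {1..u}" "closed_set p {1..v}"
    and \<sigma>: "\<And>k. k \<in> {1..v-u} \<Longrightarrow> \<sigma> k = p (u + k) - u"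
  shows "bij_betw \<sigma> {1..v-u} {1..v-u}"
proof -
  have bounds: "u < p (u + k)" "p (u + k) \<le> v" if "k \<in> {1..v-u}" for k
    using closed_prefixes_bounds[OF assms(1-5), of "u + k"] that by auto
  have "inj_on \<sigma> {1..v-u}"
  proof (rule inj_onI)
    fix k l assume k: "k \<in> {1..v-u}" and l: "l \<in> {1..v-u}" and "\<sigma> k = \<sigma> l"
    then have "p (u + k) = p (u + l)"
      using \<sigma> bounds by (metis diff_add_inverse le_add_diff_inverse less_imp_le_nat)
    then show "k = l"
      using inj_onD[OF bij_betw_imp_inj_on[OF p]] k l assms(3) by fastforce
  qed
  moreover have "\<sigma> ` {1..v-u} \<subseteq> {1..v-u}"
    using \<sigma> bounds by fastforce
  ultimately show ?thesis
    unfolding bij_betw_def by (simp add: endo_inj_surj)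
qed

lemma trace_section_restriction:
  assumes p: "bij_betw p {1..n} {1..n}" and "u \<le> v" "v \<le> n"
    and "closed_set p {1..u}" "closed_set p {1..v}"
    and \<sigma>: "\<And>k. k \<in> {1..v-u} \<Longrightarrow> \<sigma> k = p (u + k) - u"
  shows "trace (v-u) \<sigma> (min (fst x - u) (v-u), min (snd x - u) (v-u)) =
    {k \<in> {1..v-u}. u + k \<in> trace n p x}"
proof -
  have "(k \<le> min (fst x - u) (v-u) \<or> \<sigma> k \<le> min (snd x - u) (v-u)) \<longleftrightarrow>
      (u + k \<le> fst x \<or> p (u + k) \<le> snd x)" if k: "k \<in> {1..v-u}" for k
  proof -
    have "u < p (u + k)" "p (u + k) \<le> v"
      using closed_prefixes_bounds[OF assms(1-5), of "u + k"] k assms(2) by auto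
    then show ?thesis using \<sigma>[OF k] k by auto
  qed
  moreover have "u + k \<in> {1..n}" if "k \<in> {1..v-u}" for k
    using that assms(3) by auto
  ultimately show ?thesis
    by (auto simp: trace_def)
qed

lemma trace_between_closed_prefixes:
  assumes p: "bij_betw p {1..n} {1..n}" and "v \<le> n" "closed_set p {1..v}"
    and "u \<le> i" "i \<le> v" "j \<le> v"
  shows "{1..u} \<subseteq> trace n p (i, j)" "trace n p (i, j) \<subseteq> {1..v}"
proof -
  show "{1..u} \<subseteq> trace n p (i, j)"
    using assms(2,4,5) by (auto simp: trace_def)
  show "trace n p (i, j) \<subseteq> {1..v}"
  proof
    fix k assume "k \<in> trace n p (i, j)"
    then have "k \<in> {1..n}" "k \<le> i \<or> p k \<le> j" by (simp_all add: trace_def)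
    then show "k \<in> {1..v}"
      using closed_prefix_iff[OF p assms(2,3), of k] assms(5,6) by auto
  qed
qed

lemma trace_absorbs_closed_prefix:
  assumes p: "bij_betw p {1..n} {1..n}" and "u \<le> n" "closed_set p {1..u}"
  shows "u \<le> i \<Longrightarrow> trace n p (i, u) = trace n p (i, 0)"
    and "u \<le> j \<Longrightarrow> trace n p (u, j) = trace n p (0, j)"
proof -
  have "1 \<le> p k" "p k \<le> u \<longleftrightarrow> k \<le> u" if "k \<in> {1..n}" for k
    using closed_prefix_iff[OF assms that] p that bij_betwE by fastforce+
  then show "u \<le> i \<Longrightarrow> trace n p (i, u) = trace n p (i, 0)"
    and "u \<le> j \<Longrightarrow> trace n p (u, j) = trace n p (0, j)"
    unfolding trace_def by force+
qed

lemma shifted_subset_imp_subset: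
  fixes u v :: nat
  assumes "{1..u} \<subseteq> s" "s \<subseteq> {1..v}" "{1..u} \<subseteq> t"
    and "{k \<in> {1..v-u}. u + k \<in> s} \<subseteq> {k \<in> {1..v-u}. u + k \<in> t}"
  shows "s \<subseteq> t"
proof
  fix x assume "x \<in> s"
  show "x \<in> t"
  proof (cases "x \<le> u")
    case True
    then have "x \<in> {1..u}" using \<open>x \<in> s\<close> assms(2) by auto
    then show ?thesis using assms(3) by blast
  next
    case False
    moreover have "x \<le> v" using \<open>x \<in> s\<close> assms(2) by auto
    ultimately have "x - u \<in> {k \<in> {1..v-u}. u + k \<in> s}"
      using \<open>x \<in> s\<close> by auto
    then show ?thesis using assms(4) False by auto
  qed
qed

lemma grid_kernel_transport_closed_prefixes:
  assumes p: "bij_betw p {1..n} {1..n}" and "u \<le> v" "v \<le> n"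
    and "closed_set p {1..u}" "closed_set p {1..v}"
    and \<sigma>: "\<And>k. k \<in> {1..v-u} \<Longrightarrow> \<sigma> k = p (u + k) - u"
  shows "grid_kernel_transport n (v - u) (trace n p) (trace (v - u) \<sigma>)
    (\<lambda>s. {k \<in> {1..v-u}. u + k \<in> s}) (\<lambda>x. (min (fst x - u) (v - u), min (snd x - u) (v - u)))
    (\<lambda>y. (u + fst y, u + snd y)) (u, 0) (v, 0)"
proof
  have trace_u: "trace n p (u, 0) = {1..u}" and trace_v: "trace n p (v, 0) = {1..v}"
    using trace_prefix_point[OF p] assms(2,3) by auto
  show "join_hom (trace n p)" "join_hom (trace (v - u) \<sigma>)" by (fact join_hom_trace)+
  show "mono (\<lambda>s. {k \<in> {1..v-u}. u + k \<in> s})" by (auto intro: monoI)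
  show "trace (v - u) \<sigma> (min (fst x - u) (v - u), min (snd x - u) (v - u)) =
      {k \<in> {1..v-u}. u + k \<in> trace n p x}" for x
    by (rule trace_section_restriction[OF assms])
  show "trace n p x \<subseteq> trace n p y"
    if "trace n p (u, 0) \<subseteq> trace n p x" "trace n p x \<subseteq> trace n p (v, 0)"
      "trace n p (u, 0) \<subseteq> trace n p y"
      "{k \<in> {1..v-u}. u + k \<in> trace n p x} \<subseteq> {k \<in> {1..v-u}. u + k \<in> trace n p y}" for x y
    using that unfolding trace_u trace_v by (rule shifted_subset_imp_subset)
  show "(u + fst y, u + snd y) \<in> grid n \<and> trace n p (u, 0) \<subseteq> trace n p (u + fst y, u + snd y) \<and>
      trace n p (u + fst y, u + snd y) \<subseteq> trace n p (v, 0) \<and>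
      (min (fst (u + fst y, u + snd y) - u) (v - u), min (snd (u + fst y, u + snd y) - u) (v - u)) = y"
    if "y \<in> grid (v - u)" for y
  proof -
    have "u + fst y \<le> v" "u + snd y \<le> v" using that assms(2) by (auto simp: grid_def)
    then show ?thesis
      using trace_between_closed_prefixes[OF p assms(3,5), of u "u + fst y" "u + snd y"] assms(3) that
      unfolding trace_u trace_v by (intro conjI) (simp_all add: grid_def)
  qed
  \<comment> \<open>the lifted boundary point \<open>(u + i, u)\<close> lies in the class of \<open>(u + i, 0)\<close>, and symmetrically\<close>
  show "\<exists>x\<in>grid n. snd x = 0 \<and> trace n p x = trace n p (u + fst y, u + snd y)"
    if "y \<in> grid (v - u)" "snd y = 0" for y
    using that assms(2,3) trace_absorbs_closed_prefix(1)[OF p _ assms(4), of "u + fst y"]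
    by (intro bexI[of _ "(u + fst y, 0)"]) (auto simp: grid_def)
  show "\<exists>x\<in>grid n. fst x = 0 \<and> trace n p x = trace n p (u + fst y, u + snd y)"
    if "y \<in> grid (v - u)" "fst y = 0" for y
    using that assms(2,3) trace_absorbs_closed_prefix(2)[OF p _ assms(4), of "u + snd y"]
    by (intro bexI[of _ "(0, u + snd y)"]) (auto simp: grid_def)
qed (use assms(2,3) in \<open>auto simp: grid_def\<close>)

theorem subdiagram_similar_closed_prefixes:
  assumes p: "bij_betw p {1..n} {1..n}" and "u \<le> v" "v \<le> n"
    and "closed_set p {1..u}" "closed_set p {1..v}"
    and \<sigma>: "\<And>k. k \<in> {1..v-u} \<Longrightarrow> \<sigma> k = p (u + k) - u"
  shows "subdiagram_similar n (beta n p) (cls (beta n p) (u, 0)) (cls (beta n p) (v, 0))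
    (v - u) (beta (v - u) \<sigma>)"
proof -
  have "beta (v - u) \<sigma> = grid_kernel (v - u) (trace (v - u) \<sigma>)"
    using bij_betw_section_restriction[OF assms] by (rule beta_eq_trace_kernel)
  then show ?thesis
    using grid_kernel_transport.subdiagram_similar_kernels[OF grid_kernel_transport_closed_prefixes[OF assms]]
    unfolding beta_eq_trace_kernel[OF p] by simp
qed

lemma section_closed_prefixes:
  assumes "u < v" and "is_section n p {u+1..v}"
  shows "closed_set p {1..u}" "closed_set p {1..v}"
proof -
  obtain a b where ab: "a \<le> b" "{u+1..v} = {a..b}"
    and closed: "closed_set p {a..b}" "closed_set p {1..<a}"
    using assms(2) unfolding is_section_def by blast
  then have "a = u + 1" "b = v"
    using assms(1) by (simp_all add: Icc_eq_Icc)
  moreover have "{1..<u + 1} = {1..u}" "{1..v} = {1..u} \<union> {u+1..v}"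
    using assms(1) by auto
  ultimately show "closed_set p {1..u}" "closed_set p {1..v}"
    using closed ab(2) unfolding closed_set_def by auto
qed

theorem lemma4p5:
  fixes n u v :: nat and \<pi> :: "nat \<Rightarrow> nat"
  assumes "\<pi> permutes {1..n}"
    and "u < v" and "v \<le> n"
    and "is_section n \<pi> {u+1..v}"
  defines "\<sigma> \<equiv> (\<lambda>k. if k \<in> {1..v-u} then \<pi> (u + k) - u else k)"
  shows "narrows n (beta n \<pi>) (cls (beta n \<pi>) (u, 0)) \<and>
         narrows n (beta n \<pi>) (cls (beta n \<pi>) (v, 0)) \<and>
         subdiagram_similar n (beta n \<pi>) (cls (beta n \<pi>) (u, 0)) (cls (beta n \<pi>) (v, 0))
           (v - u) (beta (v - u) \<sigma>)"
proof -
  have \<pi>: "bij_betw \<pi> {1..n} {1..n}"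
    using assms(1) by (rule permutes_imp_bij)
  note closed = section_closed_prefixes[OF assms(2,4)]
  have "\<sigma> k = \<pi> (u + k) - u" if "k \<in> {1..v-u}" for k
    using that by (simp add: \<sigma>_def)
  then show ?thesis
    using narrows_closed_prefix[OF \<pi> _ closed(1)] narrows_closed_prefix[OF \<pi> _ closed(2)]
      subdiagram_similar_closed_prefixes[OF \<pi> _ assms(3) closed] assms(2,3)
    by simp
qed

end
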